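(* Let $X$, $Z$ be topological vector spaces, $C\subseteq Z$ a nonempty closed convex cone with $C^-\neq\{0\}$, $f:X\to\mathcal{F}(Z,C)$ and $x_0\in X$. If there is $z_0\in Z$ with $(x_0,z_0)\in\operatorname{Int}(\operatorname{gr}f)$, then $f$ is lattice-bounded above on some neighborhood of $x_0$. If $\operatorname{Int}C\neq\emptyset$, then conversely, if $f$ is lattice-bounded above on some neighborhood of $x_0$, there is $z_0\in Z$ with $(x_0,z_0)\in\operatorname{Int}(\operatorname{gr}f)$.
   Context: $\mathcal{F}(Z,C)=\{A\subseteq Z\colon A=\operatorname{cl}(A+C)\}$ (empty set included); $C^-=\{z^*\in Z^*\colon z^*(z)\le0\ \forall z\in C\}$. $\operatorname{gr}f=\{(x,z)\in X\times Z\colon z\in f(x)\}$, with interior taken in the product topology. $f$ is lattice-bounded above on $M\subseteq X$ iff there is $a\in Z$ with $a\in f(x)$ for all $x\in M$. *)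

theory Defs
  imports "HOL-Analysis.Analysis"
begin

text \<open>No separation axiom is assumed.\<close>
class topological_real_vector = real_vector + topological_space +
  assumes tvs_add_continuous:
    "\<And>x y::'a. ((\<lambda>(a, b). a + b) \<longlongrightarrow> x + y) (nhds x \<times>\<^sub>F nhds y)"
  and tvs_scaleR_continuous:
    "\<And>(c::real) (x::'a). ((\<lambda>(r, a). r *\<^sub>R a) \<longlongrightarrow> c *\<^sub>R x) (nhds c \<times>\<^sub>F nhds x)"

text \<open>The family F(Z,C) of sets A with A = cl(A + C) (empty set included).\<close>
definition upper_closed_sets :: "'z::topological_real_vector set \<Rightarrow> 'z set set" where
  "upper_closed_sets C = {A. A = closure {a + c | a c. a \<in> A \<and> c \<in> C}}"

definition topological_dual :: "('z::topological_real_vector \<Rightarrow> real) set" where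
  "topological_dual = {g. linear g \<and> continuous_on UNIV g}"

definition neg_dual_cone :: "'z::topological_real_vector set \<Rightarrow> ('z \<Rightarrow> real) set" where
  "neg_dual_cone C = {g \<in> topological_dual. \<forall>z\<in>C. g z \<le> 0}"

definition graph_sv :: "('x \<Rightarrow> 'z set) \<Rightarrow> ('x \<times> 'z) set" where
  "graph_sv f = {(x, z). z \<in> f x}"

definition lattice_bounded_above_on :: "('x \<Rightarrow> 'z set) \<Rightarrow> 'x set \<Rightarrow> bool" where
  "lattice_bounded_above_on f M \<longleftrightarrow> (\<exists>a. \<forall>x\<in>M. a \<in> f x)"

end

theory Submission
  imports Defs
begin

text \<open>An open box \<open>A \<times> B\<close> around \<open>(x\<^sub>0, z\<^sub>0)\<close> inside the graph
  shows that \<open>z\<^sub>0\<close> lies in every \<open>f x\<close> with \<open>x \<in> A\<close>. Conversely, if \<open>a \<in> f x\<close> for all \<open>x\<close> in a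
  neighbourhood \<open>U\<close> of \<open>x\<^sub>0\<close>, then \<open>f x \<supseteq> a + C\<close> because \<open>f x\<close> is stable under adding \<open>C\<close>;
  so for \<open>c \<in> int C\<close> the open box \<open>int U \<times> (a + int C)\<close> lies in the graph and contains
  \<open>(x\<^sub>0, a + c)\<close>.\<close>

lemma tvs_continuous_on_add_left:
  fixes a :: "'z::topological_real_vector"
  shows "continuous_on UNIV (\<lambda>b. a + b)"
  unfolding continuous_on_def
proof
  fix y :: 'z
  have "filterlim (\<lambda>b. (a, b)) (nhds a \<times>\<^sub>F nhds y) (nhds y)"
    by (rule filterlim_Pair[OF tendsto_const filterlim_ident])
  from filterlim_compose[OF tvs_add_continuous this]
  have "((\<lambda>b. a + b) \<longlongrightarrow> a + y) (nhds y)" by simp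
  then show "((\<lambda>b. a + b) \<longlongrightarrow> a + y) (at y within UNIV)"
    by (rule tendsto_mono[OF at_within_le_nhds])
qed

lemma upper_closed_sets_add_cone:
  assumes "A \<in> upper_closed_sets C" and "a \<in> A" and "c \<in> C"
  shows "a + c \<in> A"
proof -
  have closed_eq: "A = closure {a + c | a c. a \<in> A \<and> c \<in> C}"
    using assms(1) unfolding upper_closed_sets_def by (rule CollectD)
  have "a + c \<in> {a + c | a c. a \<in> A \<and> c \<in> C}" using assms(2,3) by blast
  then have "a + c \<in> closure {a + c | a c. a \<in> A \<and> c \<in> C}"
    by (rule subsetD[OF closure_subset])
  also note closed_eq[symmetric]
  finally show ?thesis .
qed

lemma lattice_bounded_above_near_if_interior_graph:
  assumes "(x0, z0) \<in> interior (graph_sv f)"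
  shows "\<exists>U. x0 \<in> interior U \<and> lattice_bounded_above_on f U"
proof -
  obtain A B where AB: "open A" "open B" "(x0, z0) \<in> A \<times> B"
    and box: "A \<times> B \<subseteq> interior (graph_sv f)"
    using open_prod_elim[OF open_interior assms] by metis
  have "\<forall>x\<in>A. z0 \<in> f x"
    using AB box interior_subset[of "graph_sv f"] by (auto simp: graph_sv_def)
  with AB show ?thesis
    by (intro exI[of _ A]) (auto simp: interior_open lattice_bounded_above_on_def)
qed

lemma interior_graph_if_lattice_bounded_above_near:
  fixes f :: "'x::topological_space \<Rightarrow> 'z::topological_real_vector set"
  assumes upper: "\<forall>x. f x \<in> upper_closed_sets C"
    and c: "c \<in> interior C"
    and U: "x0 \<in> interior U" and a: "\<forall>x\<in>U. a \<in> f x"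
  shows "(x0, a + c) \<in> interior (graph_sv f)"
proof -
  define T where "T = (\<lambda>b. -a + b) -` interior C"
  have "open T"
    unfolding T_def by (rule open_vimage[OF open_interior tvs_continuous_on_add_left])
  moreover have "interior U \<times> T \<subseteq> graph_sv f"
  proof clarify
    fix x z assume "x \<in> interior U" "z \<in> T"
    then have "a \<in> f x" "-a + z \<in> C"
      using a interior_subset[of U] interior_subset[of C] by (auto simp: T_def)
    from upper_closed_sets_add_cone[OF spec[OF upper] this]
    show "(x, z) \<in> graph_sv f" by (simp add: graph_sv_def)
  qed
  ultimately have "interior U \<times> T \<subseteq> interior (graph_sv f)"
    by (intro interior_maximal open_Times open_interior)
  moreover have "(x0, a + c) \<in> interior U \<times> T" using U c by (simp add: T_def)
  ultimately show ?thesis by blast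
qed

theorem mainTheorem11:
  fixes f :: "'x::topological_real_vector \<Rightarrow> 'z::topological_real_vector set"
    and C :: "'z set" and x0 :: 'x
  assumes "C \<noteq> {}" and "closed C" and "convex C" and "cone C"
    and "neg_dual_cone C \<noteq> {(\<lambda>_. 0)}"
    and "\<forall>x. f x \<in> upper_closed_sets C"
  shows "((\<exists>z0. (x0, z0) \<in> interior (graph_sv f)) \<longrightarrow>
            (\<exists>U. x0 \<in> interior U \<and> lattice_bounded_above_on f U))
       \<and> (interior C \<noteq> {} \<longrightarrow>
            (\<exists>U. x0 \<in> interior U \<and> lattice_bounded_above_on f U) \<longrightarrow>
            (\<exists>z0. (x0, z0) \<in> interior (graph_sv f)))"
proof (intro conjI impI)
  assume "\<exists>z0. (x0, z0) \<in> interior (graph_sv f)"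
  then show "\<exists>U. x0 \<in> interior U \<and> lattice_bounded_above_on f U"
    using lattice_bounded_above_near_if_interior_graph by blast
next
  assume "interior C \<noteq> {}"
  then obtain c where "c \<in> interior C" by blast
  assume "\<exists>U. x0 \<in> interior U \<and> lattice_bounded_above_on f U"
  then obtain U a where "x0 \<in> interior U" "\<forall>x\<in>U. a \<in> f x"
    by (auto simp: lattice_bounded_above_on_def)
  with interior_graph_if_lattice_bounded_above_near[OF assms(6) \<open>c \<in> interior C\<close>]
  show "\<exists>z0. (x0, z0) \<in> interior (graph_sv f)" by blast
qed

end
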